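(* Let $M\ge1$ and $K\ge1$ be integers and consider the binomial family $\mathcal F=\{f(y;\theta)=\binom{M}{y}\theta^y(1-\theta)^{M-y}:\theta\in(0,1),\ y\in\{0,\dots,M\}\}$. For any integer $r\ge1$, the condition $(r+1)K-1\le M$ is necessary and sufficient for $\mathcal F$ to be strongly identifiable in the $r$-th order; that is, it is necessary and sufficient for the following property: for any $K$ distinct points $\theta_1,\dots,\theta_K\in(0,1)$ and any reals $\beta_{jl}$, $j=1,\dots,K$, $l=0,\dots,r$, if $$\sup_{y\in\{0,\dots,M\}}\Big|\sum_{j=1}^K\sum_{l=0}^r\beta_{jl}\frac{\partial^lf(y;\theta_j)}{\partial\theta^l}\Big|=0,$$ then $\beta_{jl}=0$ for all $j=1,\dots,K$ and $l=0,\dots,r$. *)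

theory Defs
  imports "HOL-Analysis.Analysis"
begin

definition binom_pmf :: "nat \<Rightarrow> nat \<Rightarrow> real \<Rightarrow> real" where
  "binom_pmf M y \<theta> = real (M choose y) * \<theta> ^ y * (1 - \<theta>) ^ (M - y)"

definition strongly_identifiable :: "nat \<Rightarrow> nat \<Rightarrow> nat \<Rightarrow> bool" where
  "strongly_identifiable M K r \<longleftrightarrow>
    (\<forall>(\<theta> :: nat \<Rightarrow> real) (\<beta> :: nat \<Rightarrow> nat \<Rightarrow> real).
       inj_on \<theta> {1..K} \<and> (\<forall>j\<in>{1..K}. 0 < \<theta> j \<and> \<theta> j < 1) \<and>
       (SUP y\<in>{0..M}. \<bar>\<Sum>j=1..K. \<Sum>l=0..r. \<beta> j l * (deriv ^^ l) (binom_pmf M y) (\<theta> j)\<bar>) = 0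
       \<longrightarrow> (\<forall>j\<in>{1..K}. \<forall>l\<in>{0..r}. \<beta> j l = 0))"

end

(*
  Each f(y; -) is the Bernstein polynomial B_{M,y}, and B_{M,0}, ..., B_{M,M} span the
  polynomials of degree at most M. Hence the hypothesis says exactly that the functional
  p |-> sum_{j,l} beta_jl p^(l)(theta_j) vanishes on all polynomials of degree at most M.

  If (r+1)K - 1 <= M, test it on (X - theta_j)^l * prod_{i ~= j} (X - theta_i)^(r+1), where l is
  the largest index with beta_jl ~= 0: every term but beta_jl p^(l)(theta_j) vanishes, a
  contradiction (uniqueness of Hermite interpolation). If (r+1)K - 1 > M, the M + 1 linear
  conditions on the (r+1)K unknowns beta_jl have a nonzero solution.
*)
theory Submission
  imports Defs "HOL-Computational_Algebra.Polynomial"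
begin

lemma exists_nontrivial_solution:
  fixes a :: "nat \<Rightarrow> 'b \<Rightarrow> 'a::field"
  assumes "finite S" "m < card S"
  shows "\<exists>x. (\<exists>s\<in>S. x s \<noteq> 0) \<and> (\<forall>i<m. (\<Sum>s\<in>S. a i s * x s) = 0)"
  using assms
proof (induction m arbitrary: S a)
  case 0
  then have "S \<noteq> {}" by auto
  then show ?case by (intro exI[of _ "\<lambda>_. 1"]) auto
next
  case (Suc m)
  show ?case
  proof (cases "\<forall>s\<in>S. a m s = 0")
    case True
    obtain x where "\<exists>s\<in>S. x s \<noteq> 0" "\<forall>i<m. (\<Sum>s\<in>S. a i s * x s) = 0"
      using Suc.IH[of S a] Suc.prems by auto
    with True show ?thesis by (auto simp: less_Suc_eq)
  next
    case False
    then obtain s0 where s0: "s0 \<in> S" "a m s0 \<noteq> 0" by auto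
    define S' where "S' = S - {s0}"
    have S': "finite S'" "m < card S'" using Suc.prems s0 by (auto simp: S'_def)
    txt \<open>Eliminate the unknown at s0 using the last equation.\<close>
    define a' where "a' i s = a i s - a i s0 * a m s / a m s0" for i s
    obtain x' where x': "\<exists>s\<in>S'. x' s \<noteq> 0" "\<forall>i<m. (\<Sum>s\<in>S'. a' i s * x' s) = 0"
      using Suc.IH[OF S'] by blast
    define x where "x s = (if s = s0 then - (\<Sum>t\<in>S'. a m t * x' t) / a m s0 else x' s)" for s
    have split: "(\<Sum>s\<in>S. a i s * x s) = a i s0 * x s0 + (\<Sum>s\<in>S'. a i s * x' s)" for i
    proof -
      have "(\<Sum>s\<in>S. a i s * x s) = a i s0 * x s0 + (\<Sum>s\<in>S'. a i s * x s)"
        using Suc.prems(1) s0 by (simp add: S'_def sum.remove)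
      also have "(\<Sum>s\<in>S'. a i s * x s) = (\<Sum>s\<in>S'. a i s * x' s)"
        by (rule sum.cong) (auto simp: x_def S'_def)
      finally show ?thesis .
    qed
    have "(\<Sum>s\<in>S. a i s * x s) = 0" if "i < Suc m" for i
    proof (cases "i = m")
      case True
      then show ?thesis using s0 unfolding split by (simp add: x_def)
    next
      case False
      with that x' have "(\<Sum>s\<in>S'. a' i s * x' s) = 0" by simp
      then have "(\<Sum>s\<in>S'. a i s * x' s) - a i s0 / a m s0 * (\<Sum>s\<in>S'. a m s * x' s) = 0"
        by (simp add: a'_def algebra_simps sum_subtractf sum_distrib_left)
      then show ?thesis using s0 unfolding split by (simp add: x_def field_simps)
    qed
    moreover have "\<exists>s\<in>S. x s \<noteq> 0" using x' by (auto simp: x_def S'_def)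
    ultimately show ?thesis by blast
  qed
qed

lemma higher_deriv_poly: "(deriv ^^ l) (poly p) = poly ((pderiv ^^ l) p)"
proof (induction l)
  case (Suc l)
  have "deriv (poly q) = poly (pderiv q)" for q :: "'a poly"
    by (simp add: fun_eq_iff DERIV_imp_deriv[OF poly_DERIV])
  with Suc.IH show ?case by simp
qed simp

lemma higher_pderiv_eq_0_iff:
  fixes p :: "'a::{idom,semiring_char_0} poly"
  assumes "p \<noteq> 0"
  shows "(pderiv ^^ l) p = 0 \<longleftrightarrow> degree p < l"
proof (induction l)
  case (Suc l)
  then show ?case by (auto simp: pderiv_eq_0_iff degree_higher_pderiv)
qed (simp add: assms)

lemma order_higher_pderiv:
  fixes p :: "'a::{idom,semiring_char_0} poly"
  assumes "p \<noteq> 0" "l \<le> order a p"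
  shows "order a ((pderiv ^^ l) p) = order a p - l"
  using assms(2)
proof (induction l)
  case (Suc l)
  let ?q = "(pderiv ^^ l) p"
  have "Suc l \<le> degree p" using Suc.prems order_degree[OF assms(1), of a] by linarith
  then have "?q \<noteq> 0" using higher_pderiv_eq_0_iff[OF assms(1)] by simp
  moreover have "poly ?q a = 0" using Suc by (simp add: order_root)
  ultimately have "order a ?q = Suc (order a (pderiv ?q))" by (rule order_pderiv)
  with Suc show ?case by simp
qed simp

lemma poly_higher_pderiv_eq_0_iff:
  fixes p :: "'a::{idom,semiring_char_0} poly"
  assumes "p \<noteq> 0" "l \<le> order a p"
  shows "poly ((pderiv ^^ l) p) a = 0 \<longleftrightarrow> l < order a p"
proof -
  have "(pderiv ^^ l) p \<noteq> 0"
    using assms order_degree[OF assms(1), of a] higher_pderiv_eq_0_iff[OF assms(1)] by simp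
  then show ?thesis using assms by (auto simp: order_root order_higher_pderiv)
qed

definition hermite_functional :: "nat \<Rightarrow> nat \<Rightarrow> (nat \<Rightarrow> 'a) \<Rightarrow> (nat \<Rightarrow> nat \<Rightarrow> 'a) \<Rightarrow>
    'a::{comm_semiring_1,semiring_no_zero_divisors} poly \<Rightarrow> 'a" where
  "hermite_functional K r \<theta> \<beta> p = (\<Sum>j=1..K. \<Sum>l=0..r. \<beta> j l * poly ((pderiv ^^ l) p) (\<theta> j))"

lemma hermite_functional_add:
  "hermite_functional K r \<theta> \<beta> (p + q) =
    hermite_functional K r \<theta> \<beta> p + hermite_functional K r \<theta> \<beta> q"
  by (simp add: hermite_functional_def higher_pderiv_add distrib_left sum.distrib)

lemma hermite_functional_smult:
  "hermite_functional K r \<theta> \<beta> (smult c p) = c * hermite_functional K r \<theta> \<beta> p"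
  by (simp add: hermite_functional_def higher_pderiv_smult sum_distrib_left algebra_simps)

lemma exists_poly_with_root_orders:
  fixes \<theta> :: "'b \<Rightarrow> 'a::idom"
  assumes "finite A" "inj_on \<theta> A" "j0 \<in> A"
  obtains p where "p \<noteq> 0" "degree p \<le> m + (card A - 1) * n" "order (\<theta> j0) p = m"
    "\<And>i. i \<in> A - {j0} \<Longrightarrow> n \<le> order (\<theta> i) p"
proof
  define Q where "Q = (\<Prod>i\<in>A - {j0}. [:-\<theta> i, 1:] ^ n)"
  define p where "p = [:-\<theta> j0, 1:] ^ m * Q"
  have Q_j0: "poly Q (\<theta> j0) \<noteq> 0"
  proof -
    have "\<theta> j0 \<noteq> \<theta> i" if "i \<in> A - {j0}" for i
      using that assms(2,3) unfolding inj_on_def by blast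
    then show ?thesis using assms(1) by (simp add: Q_def poly_prod)
  qed
  then show "p \<noteq> 0" by (auto simp: p_def)
  have "degree Q \<le> (\<Sum>i\<in>A - {j0}. degree ([:-\<theta> i, 1:] ^ n))"
    using degree_prod_sum_le[OF finite_Diff[OF assms(1)], of "\<lambda>i. [:-\<theta> i, 1:] ^ n"]
    unfolding Q_def comp_def .
  also have "\<dots> = (card A - 1) * n"
    using assms(1,3) by (simp add: degree_linear_power)
  finally show "degree p \<le> m + (card A - 1) * n"
    using degree_mult_le[of "[:-\<theta> j0, 1:] ^ m" Q] unfolding p_def degree_linear_power by linarith
  show "order (\<theta> j0) p = m"
    using \<open>p \<noteq> 0\<close> Q_j0 by (simp add: p_def order_mult order_power_n_n order_0I)
  fix i assume "i \<in> A - {j0}"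
  then have "[:-\<theta> i, 1:] ^ n dvd p"
    using assms(1) by (auto simp: p_def Q_def intro: dvd_mult)
  then show "n \<le> order (\<theta> i) p" using \<open>p \<noteq> 0\<close> order_divides by blast
qed

lemma hermite_functional_eq_0_imp_coeffs_eq_0:
  fixes \<theta> :: "nat \<Rightarrow> 'a::{idom,semiring_char_0}"
  assumes inj: "inj_on \<theta> {1..K}"
    and van: "\<And>p. degree p \<le> (r + 1) * K - 1 \<Longrightarrow> hermite_functional K r \<theta> \<beta> p = 0"
    and j0: "j0 \<in> {1..K}"
  shows "\<forall>l\<in>{0..r}. \<beta> j0 l = 0"
proof (rule ccontr)
  assume "\<not> ?thesis"
  then have ne: "{l\<in>{0..r}. \<beta> j0 l \<noteq> 0} \<noteq> {}" by auto
  define l0 where "l0 = Max {l\<in>{0..r}. \<beta> j0 l \<noteq> 0}"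
  have l0: "l0 \<le> r" "\<beta> j0 l0 \<noteq> 0" using Max_in[OF _ ne] by (auto simp: l0_def)
  have above_l0: "\<beta> j0 l = 0" if "l0 < l" "l \<le> r" for l
    using Max_ge[of "{l\<in>{0..r}. \<beta> j0 l \<noteq> 0}" l] that by (fastforce simp: l0_def)
  txt \<open>A polynomial with a root of order exactly l0 at \<open>\<theta> j0\<close> and of order above r at the
    other nodes: the functional sees only the term \<open>\<beta> j0 l0\<close>.\<close>
  obtain p where "p \<noteq> 0" and deg_p: "degree p \<le> l0 + (K - 1) * (r + 1)"
    and order_j0: "order (\<theta> j0) p = l0"
    and order_other: "\<And>i. i \<in> {1..K} - {j0} \<Longrightarrow> r + 1 \<le> order (\<theta> i) p"
    using exists_poly_with_root_orders[OF _ inj j0, of l0 "r + 1"] by auto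
  have "l0 + (K - 1) * (r + 1) \<le> (r + 1) * K - 1"
    using l0 j0 by (cases K) (auto simp: algebra_simps)
  with deg_p have "hermite_functional K r \<theta> \<beta> p = 0" by (intro van) linarith
  let ?c = "\<beta> j0 l0 * poly ((pderiv ^^ l0) p) (\<theta> j0)"
  have single_term:
    "\<beta> j l * poly ((pderiv ^^ l) p) (\<theta> j) = (if l = l0 then if j = j0 then ?c else 0 else 0)"
    if "j \<in> {1..K}" "l \<le> r" for j l
  proof (cases "j = j0")
    case True
    then show ?thesis
      using that above_l0 poly_higher_pderiv_eq_0_iff[OF \<open>p \<noteq> 0\<close>, of l "\<theta> j0"]
      by (cases "l0 < l") (auto simp: order_j0)
  next
    case False
    then have "l < order (\<theta> j) p" using that order_other[of j] by simp
    then show ?thesis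
      using False poly_higher_pderiv_eq_0_iff[OF \<open>p \<noteq> 0\<close>, of l "\<theta> j"] by simp
  qed
  have "hermite_functional K r \<theta> \<beta> p =
      (\<Sum>j=1..K. \<Sum>l=0..r. if l = l0 then if j = j0 then ?c else 0 else 0)"
    unfolding hermite_functional_def by (intro sum.cong refl) (simp add: single_term)
  also have "\<dots> = ?c"
    using j0 l0 by (simp only: sum.delta finite_atLeastAtMost atLeastAtMost_iff) simp
  finally have "?c = 0" using \<open>hermite_functional K r \<theta> \<beta> p = 0\<close> by simp
  moreover have "poly ((pderiv ^^ l0) p) (\<theta> j0) \<noteq> 0"
    using poly_higher_pderiv_eq_0_iff[OF \<open>p \<noteq> 0\<close>, of l0 "\<theta> j0"] by (simp add: order_j0)
  ultimately show False using l0 by simp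
qed

definition Bernstein_poly :: "nat \<Rightarrow> nat \<Rightarrow> real poly" where
  "Bernstein_poly n k = smult (of_nat (n choose k)) ([:0, 1:] ^ k * [:1, -1:] ^ (n - k))"

lemma poly_Bernstein_poly: "poly (Bernstein_poly n k) = Bernstein n k"
  by (simp add: fun_eq_iff Bernstein_poly_def Bernstein_def)

lemma monom_eq_sum_Bernstein_poly:
  assumes "k \<le> n"
  shows "monom 1 k =
    (\<Sum>i\<le>n - k. smult (real ((n - k) choose i) / real (n choose (k + i))) (Bernstein_poly n (k + i)))"
proof -
  have "x ^ k = poly (\<Sum>i\<le>n - k. smult (real ((n - k) choose i) / real (n choose (k + i)))
                        (Bernstein_poly n (k + i))) x" for x :: real
  proof -
    have "x ^ k = x ^ k * (\<Sum>i\<le>n - k. real ((n - k) choose i) * x ^ i * (1 - x) ^ (n - k - i))"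
      using binomial_ring[of x "1 - x" "n - k"] by simp
    also have "\<dots> = (\<Sum>i\<le>n - k. real ((n - k) choose i) * x ^ (k + i) * (1 - x) ^ (n - (k + i)))"
      by (simp add: sum_distrib_left power_add algebra_simps diff_diff_add)
    also have "\<dots> = poly (\<Sum>i\<le>n - k. smult (real ((n - k) choose i) / real (n choose (k + i)))
                        (Bernstein_poly n (k + i))) x"
      using assms by (auto simp: poly_sum poly_Bernstein_poly Bernstein_def intro!: sum.cong)
    finally show ?thesis .
  qed
  then show ?thesis by (simp add: poly_eq_poly_eq_iff[symmetric] fun_eq_iff poly_monom)
qed

lemma linear_functional_vanishing_on_Bernstein_polys:
  fixes L :: "real poly \<Rightarrow> real"
  assumes add: "\<And>p q. L (p + q) = L p + L q"
    and smult: "\<And>c p. L (smult c p) = c * L p"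
    and Bernstein: "\<And>k. k \<le> n \<Longrightarrow> L (Bernstein_poly n k) = 0"
    and "degree p \<le> n"
  shows "L p = 0"
proof -
  have "L 0 = 0" using smult[of 0 0] by simp
  then have L_sum: "L (sum f A) = (\<Sum>x\<in>A. L (f x))" for f :: "nat \<Rightarrow> real poly" and A
    by (induction A rule: infinite_finite_induct) (simp_all add: add)
  have L_monom: "L (monom c k) = 0" if "k \<le> n" for c k
  proof -
    have "L (monom 1 k) = 0"
      using that by (simp add: monom_eq_sum_Bernstein_poly L_sum smult Bernstein)
    then show ?thesis using smult[of c "monom 1 k"] by (simp add: smult_monom)
  qed
  have "L p = L (\<Sum>i\<le>degree p. monom (coeff p i) i)" by (simp add: poly_as_sum_of_monoms)
  also have "\<dots> = 0" using \<open>degree p \<le> n\<close> by (simp add: L_sum L_monom)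
  finally show ?thesis .
qed

lemma SUP_abs_eq_0_iff:
  fixes g :: "'a \<Rightarrow> real"
  assumes "finite A" "A \<noteq> {}"
  shows "(SUP x\<in>A. \<bar>g x\<bar>) = 0 \<longleftrightarrow> (\<forall>x\<in>A. g x = 0)"
proof
  assume sup: "(SUP x\<in>A. \<bar>g x\<bar>) = 0"
  show "\<forall>x\<in>A. g x = 0"
  proof
    fix x assume "x \<in> A"
    then have "\<bar>g x\<bar> \<le> (SUP x\<in>A. \<bar>g x\<bar>)"
      using assms(1) by (intro cSUP_upper) (auto intro: bdd_above_finite)
    then show "g x = 0" using sup by simp
  qed
next
  assume "\<forall>x\<in>A. g x = 0"
  then have "(SUP x\<in>A. \<bar>g x\<bar>) = (SUP x\<in>A. 0)" by (intro SUP_cong) auto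
  then show "(SUP x\<in>A. \<bar>g x\<bar>) = 0" using assms(2) by simp
qed

lemma binom_pmf_eq_Bernstein: "binom_pmf = Bernstein"
  by (simp add: fun_eq_iff binom_pmf_def Bernstein_def)

lemma strongly_identifiable_iff_hermite_functional:
  "strongly_identifiable M K r \<longleftrightarrow>
    (\<forall>\<theta> \<beta>. inj_on \<theta> {1..K} \<and> (\<forall>j\<in>{1..K}. 0 < \<theta> j \<and> \<theta> j < 1) \<and>
       (\<forall>y\<in>{0..M}. hermite_functional K r \<theta> \<beta> (Bernstein_poly M y) = 0)
       \<longrightarrow> (\<forall>j\<in>{1..K}. \<forall>l\<in>{0..r}. \<beta> j l = 0))"
  unfolding strongly_identifiable_def hermite_functional_def
  by (simp add: SUP_abs_eq_0_iff binom_pmf_eq_Bernstein higher_deriv_poly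
      flip: poly_Bernstein_poly)

lemma strongly_identifiable_if_enough_trials:
  assumes "(r + 1) * K - 1 \<le> M"
  shows "strongly_identifiable M K r"
  unfolding strongly_identifiable_iff_hermite_functional
proof (intro allI impI)
  fix \<theta> :: "nat \<Rightarrow> real" and \<beta> :: "nat \<Rightarrow> nat \<Rightarrow> real"
  assume hyps: "inj_on \<theta> {1..K} \<and> (\<forall>j\<in>{1..K}. 0 < \<theta> j \<and> \<theta> j < 1) \<and>
    (\<forall>y\<in>{0..M}. hermite_functional K r \<theta> \<beta> (Bernstein_poly M y) = 0)"
  have "hermite_functional K r \<theta> \<beta> p = 0" if "degree p \<le> (r + 1) * K - 1" for p
    by (rule linear_functional_vanishing_on_Bernstein_polys[where n = M])
      (use hyps that assms in \<open>simp_all add: hermite_functional_add hermite_functional_smult\<close>)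
  then show "\<forall>j\<in>{1..K}. \<forall>l\<in>{0..r}. \<beta> j l = 0"
    using hermite_functional_eq_0_imp_coeffs_eq_0 hyps by blast
qed

lemma not_strongly_identifiable_if_few_trials:
  assumes "M + 1 < (r + 1) * K"
  shows "\<not> strongly_identifiable M K r"
proof
  assume SI: "strongly_identifiable M K r"
  define S where "S = {1..K} \<times> {0..r}"
  have "M + 1 < card S" using assms by (simp add: S_def algebra_simps)
  define \<theta> where "\<theta> j = real j / real (K + 1)" for j
  define a where "a y s = poly ((pderiv ^^ snd s) (Bernstein_poly M y)) (\<theta> (fst s))" for y s
  obtain x where x: "\<exists>s\<in>S. x s \<noteq> 0" "\<forall>y<M + 1. (\<Sum>s\<in>S. a y s * x s) = 0"
    using exists_nontrivial_solution[OF _ \<open>M + 1 < card S\<close>, of a] by (auto simp: S_def)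
  have "hermite_functional K r \<theta> (curry x) (Bernstein_poly M y) = (\<Sum>s\<in>S. a y s * x s)" for y
    by (simp add: hermite_functional_def S_def a_def sum.cartesian_product case_prod_beta mult.commute)
  then have "\<forall>y\<in>{0..M}. hermite_functional K r \<theta> (curry x) (Bernstein_poly M y) = 0"
    using x(2) by simp
  moreover have "inj_on \<theta> {1..K}" "\<forall>j\<in>{1..K}. 0 < \<theta> j \<and> \<theta> j < 1"
    by (auto simp: inj_on_def \<theta>_def)
  ultimately have "\<forall>j\<in>{1..K}. \<forall>l\<in>{0..r}. curry x j l = 0"
    using SI unfolding strongly_identifiable_iff_hermite_functional by blast
  then show False using x(1) by (auto simp: S_def)
qed

theorem proposition1:
  fixes M K r :: nat
  assumes "M \<ge> 1" and "K \<ge> 1" and "r \<ge> 1"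
  shows "(r + 1) * K - 1 \<le> M \<longleftrightarrow> strongly_identifiable M K r"
proof
  assume "(r + 1) * K - 1 \<le> M"
  then show "strongly_identifiable M K r" by (rule strongly_identifiable_if_enough_trials)
next
  assume "strongly_identifiable M K r"
  then show "(r + 1) * K - 1 \<le> M"
    using not_strongly_identifiable_if_few_trials[of M r K] by linarith
qed

end
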